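(* For $z\in\mathbb{D}$ (the open unit disk), the Green function $g_z$ of the Laplacian on $\mathbb{D}$ with pole at $z$ satisfies $\|g_z\|_2\leq\|g_0\|_2=(8\pi)^{-1/2}$, where $\|\cdot\|_2$ is the $L^2(\mathbb{D})$ norm with respect to area measure.
   Context: The Green function of the Laplacian on $\mathbb{D}$ is $g_z(\xi)=\frac{1}{2\pi}\ln\left|\frac{\xi-z}{1-\bar z\xi}\right|$, i.e. the solution of $\Delta g_z=\delta_z$ in $\mathbb{D}$ with $g_z=0$ on $\partial\mathbb{D}$. *)

theory Defs
  imports "HOL-Analysis.Analysis"
begin

definition green_disc :: "complex \<Rightarrow> complex \<Rightarrow> real" where
  "green_disc z \<xi> = ln (cmod ((\<xi> - z) / (1 - cnj z * \<xi>))) / (2 * pi)"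

definition L2_norm_disc :: "(complex \<Rightarrow> real) \<Rightarrow> real" where
  "L2_norm_disc f = sqrt (\<integral>\<xi>\<in>ball 0 1. (f \<xi>)\<^sup>2 \<partial>lborel)"

end

theory Submission
  imports Defs "HOL-Real_Asymp.Real_Asymp"
begin

text \<open>
  Write \<open>2 \<pi> g\<^sub>z = ln s\<close> with \<open>s = |\<phi>\<^sub>z|\<close> for the disc automorphism
  \<open>\<phi>\<^sub>z \<xi> = (\<xi> - z) / (1 - z\<^sup>* \<xi>)\<close>. Since \<open>(ln s)\<^sup>2\<close> is the integral of \<open>-2 ln r / r\<close> over
  \<open>[s, 1]\<close>, Tonelli turns the squared \<open>L\<^sup>2\<close> norm into an integral over \<open>r \<in> (0, 1]\<close> of
  \<open>-2 ln r / r\<close> times the area of the sublevel set \<open>{|\<phi>\<^sub>z| \<le> r}\<close>. That sublevel set is a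
  disc of Apollonius of radius \<open>r (1 - |z|\<^sup>2) / (1 - r\<^sup>2 |z|\<^sup>2) \<le> r\<close>, with equality when
  \<open>z = 0\<close>; so the integral is at most \<open>\<integral>\<^sub>0\<^sup>1 -2 ln r / r \<cdot> \<pi> r\<^sup>2 dr = \<pi> / 2\<close>, attained
  at \<open>z = 0\<close>, and dividing by \<open>4 \<pi>\<^sup>2\<close> gives \<open>1 / (8 \<pi>)\<close>.
\<close>

lemma ln_squared_has_integral:
  fixes s :: real
  assumes "0 < s" "s \<le> 1"
  shows "((\<lambda>r. - 2 * ln r / r) has_integral (ln s)\<^sup>2) {s..1}"
proof -
  have "((\<lambda>r. - 2 * ln r / r) has_integral (- (ln 1)\<^sup>2) - (- (ln s)\<^sup>2)) {s..1}"
  proof (rule fundamental_theorem_of_calculus)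
    fix x assume "x \<in> {s..1}"
    with assms have "0 < x" by auto
    then show "((\<lambda>r. - (ln r)\<^sup>2) has_vector_derivative - 2 * ln x / x) (at x within {s..1})"
      by (auto intro!: derivative_eq_intros simp: has_real_derivative_iff_has_vector_derivative[symmetric])
  qed (use assms in auto)
  then show ?thesis by simp
qed

text \<open>Positivity is only needed almost everywhere, but it is needed: where \<open>s x = 0\<close> the
  left-hand side sees \<open>ln 0 = 0\<close> while the weight is not integrable at \<open>0\<close>.\<close>

lemma nn_integral_ln_squared_layer_cake:
  assumes "sigma_finite_measure M"
    and [measurable]: "s \<in> borel_measurable M" "A \<in> sets M"
    and le_1: "\<And>x. x \<in> A \<Longrightarrow> s x \<le> 1"
    and pos: "AE x in M. x \<in> A \<longrightarrow> 0 < s x"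
  shows "(\<integral>\<^sup>+x. indicator A x * ennreal ((ln (s x))\<^sup>2) \<partial>M) =
         (\<integral>\<^sup>+r. indicator {0<..1} r * ennreal (- 2 * ln r / r) * emeasure M {x \<in> A. s x \<le> r} \<partial>lborel)"
proof -
  interpret pair_sigma_finite M lborel
    by (intro pair_sigma_finite.intro assms(1) lborel.sigma_finite_measure_axioms)
  define k where "k x r = indicator {0<..1} r * ennreal (- 2 * ln r / r) * indicator {x \<in> A. s x \<le> r} x"
    for x r
  have [measurable]: "(\<lambda>(x, r). k x r) \<in> borel_measurable (M \<Otimes>\<^sub>M lborel)"
  proof -
    have "Measurable.pred (M \<Otimes>\<^sub>M lborel) (\<lambda>(x, r). x \<in> A \<and> s x \<le> r)"
      by measurable
    then show ?thesis
      unfolding k_def indicator_def by (simp add: case_prod_beta) measurable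
  qed
  have "AE x in M. indicator A x * ennreal ((ln (s x))\<^sup>2) = (\<integral>\<^sup>+r. k x r \<partial>lborel)"
    using pos
  proof eventually_elim
    case (elim x)
    show ?case
    proof (cases "x \<in> A")
      case True
      with elim le_1 have s: "0 < s x" "s x \<le> 1" by auto
      have "(\<integral>\<^sup>+r. k x r \<partial>lborel) = (\<integral>\<^sup>+r. ennreal (- 2 * ln r / r) * indicator {s x..1} r \<partial>lborel)"
        using True s by (intro nn_integral_cong) (auto simp: k_def indicator_def)
      also have "\<dots> = ennreal ((ln (s x))\<^sup>2)"
        using s by (intro nn_integral_has_integral_lebesgue' ln_squared_has_integral)
          (auto simp: divide_nonpos_pos)
      finally show ?thesis using True by simp
    qed (simp add: k_def)
  qed
  then have "(\<integral>\<^sup>+x. indicator A x * ennreal ((ln (s x))\<^sup>2) \<partial>M) = (\<integral>\<^sup>+x. (\<integral>\<^sup>+r. k x r \<partial>lborel) \<partial>M)"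
    by (rule nn_integral_cong_AE)
  also have "\<dots> = (\<integral>\<^sup>+r. (\<integral>\<^sup>+x. k x r \<partial>M) \<partial>lborel)"
    by (rule Fubini'[symmetric]) measurable
  also have "\<dots> = (\<integral>\<^sup>+r. indicator {0<..1} r * ennreal (- 2 * ln r / r) * emeasure M {x \<in> A. s x \<le> r} \<partial>lborel)"
    unfolding k_def by (simp add: nn_integral_cmult_indicator)
  finally show ?thesis .
qed

lemma r_ln_r_has_integral: "((\<lambda>r::real. - 2 * r * ln r) has_integral 1/2) {0..1}"
proof -
  define F where "F r = r\<^sup>2 / 2 - r\<^sup>2 * ln r" for r :: real
  have "continuous_on {0..1} F"
  proof (rule continuous_on_IccI)
    show "(F \<longlongrightarrow> F 0) (at_right 0)" "(F \<longlongrightarrow> F 1) (at_left 1)"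
      unfolding F_def by real_asymp+
    show "F \<midarrow>x\<rightarrow> F x" if "0 < x" for x
      using that unfolding F_def by (intro tendsto_intros) auto
  qed simp
  moreover have "(F has_vector_derivative - 2 * x * ln x) (at x)" if "0 < x" for x
    using that unfolding F_def
    by (auto intro!: derivative_eq_intros
        simp: has_real_derivative_iff_has_vector_derivative[symmetric] field_simps power2_eq_square)
  ultimately have "((\<lambda>r. - 2 * r * ln r) has_integral F 1 - F 0) {0..1}"
    by (intro fundamental_theorem_of_calculus_interior) auto
  then show ?thesis by (simp add: F_def)
qed

lemma nn_integral_ln_weight_times_disc_area:
  "(\<integral>\<^sup>+r. indicator {0<..1} r * ennreal (- 2 * ln r / r) * ennreal (pi * r\<^sup>2) \<partial>lborel) = ennreal (pi / 2)"
proof -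
  have "(\<integral>\<^sup>+r. indicator {0<..1} r * ennreal (- 2 * ln r / r) * ennreal (pi * r\<^sup>2) \<partial>lborel) =
        (\<integral>\<^sup>+r. ennreal (pi * (- 2 * r * ln r)) * indicator {0..1} r \<partial>lborel)"
  proof (intro nn_integral_cong)
    fix r :: real
    show "indicator {0<..1} r * ennreal (- 2 * ln r / r) * ennreal (pi * r\<^sup>2) =
          ennreal (pi * (- 2 * r * ln r)) * indicator {0..1} r"
    proof (cases "0 < r \<and> r \<le> 1")
      case True
      then have "- 2 * ln r / r * (pi * r\<^sup>2) = pi * (- 2 * r * ln r)"
        by (simp add: field_simps power2_eq_square)
      with True show ?thesis
        by (simp add: ennreal_mult'[symmetric] divide_nonpos_pos)
    qed (auto simp: indicator_def)
  qed
  also have "\<dots> = ennreal (pi * (1 / 2))"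
  proof (intro nn_integral_has_integral_lebesgue')
    show "0 \<le> pi * (- 2 * r * ln r)" if "r \<in> {0..1}" for r
      using that by (cases "r = 0") (auto intro!: mult_nonneg_nonpos simp: ln_le_zero_iff)
  qed (rule has_integral_mult_right[OF r_ln_r_has_integral])
  finally show ?thesis by simp
qed

definition disc_moebius :: "complex \<Rightarrow> complex \<Rightarrow> complex" where
  "disc_moebius z \<xi> = (\<xi> - z) / (1 - cnj z * \<xi>)"

lemmas sets_borel_ball [measurable] = borel_open[OF open_ball]

lemma borel_measurable_disc_moebius [measurable]: "disc_moebius z \<in> borel_measurable borel"
  unfolding disc_moebius_def by measurable

lemma norm_one_minus_cnj_mult_squared:
  "(cmod (1 - cnj z * \<xi>))\<^sup>2 - (cmod (\<xi> - z))\<^sup>2 = (1 - (cmod \<xi>)\<^sup>2) * (1 - (cmod z)\<^sup>2)"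
  unfolding cmod_power2 by (simp add: algebra_simps power2_eq_square)

text \<open>Multiplying out \<open>|\<xi> - z|\<^sup>2 \<le> r\<^sup>2 |1 - z\<^sup>* \<xi>|\<^sup>2\<close> and completing the square in \<open>\<xi>\<close>.\<close>

lemma apollonius_identity:
  fixes r :: real and z \<xi> :: complex
  defines "D \<equiv> 1 - r\<^sup>2 * (cmod z)\<^sup>2"
  shows "(cmod (of_real D * \<xi> - of_real (1 - r\<^sup>2) * z))\<^sup>2 - r\<^sup>2 * (1 - (cmod z)\<^sup>2)\<^sup>2 =
         D * ((cmod (\<xi> - z))\<^sup>2 - r\<^sup>2 * (cmod (1 - cnj z * \<xi>))\<^sup>2)"
  unfolding D_def cmod_power2 by (simp add: algebra_simps power2_eq_square)

lemma norm_diff_lt_norm_one_minus_cnj_mult: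
  assumes "cmod z < 1" "cmod \<xi> < 1"
  shows "cmod (\<xi> - z) < cmod (1 - cnj z * \<xi>)"
proof -
  have "0 < (1 - (cmod \<xi>)\<^sup>2) * (1 - (cmod z)\<^sup>2)"
    using assms by (simp add: abs_square_less_1)
  then have "(cmod (\<xi> - z))\<^sup>2 < (cmod (1 - cnj z * \<xi>))\<^sup>2"
    using norm_one_minus_cnj_mult_squared[of z \<xi>] by linarith
  then show ?thesis
    by (rule power2_less_imp_less) simp
qed

lemma norm_disc_moebius_less_1:
  assumes "cmod z < 1" "cmod \<xi> < 1"
  shows "cmod (disc_moebius z \<xi>) < 1"
  using norm_diff_lt_norm_one_minus_cnj_mult[OF assms]
  by (simp add: disc_moebius_def norm_divide divide_less_eq)

lemma disc_moebius_eq_0_iff: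
  assumes "cmod z < 1" "cmod \<xi> < 1"
  shows "disc_moebius z \<xi> = 0 \<longleftrightarrow> \<xi> = z"
  using norm_diff_lt_norm_one_minus_cnj_mult[OF assms] by (auto simp: disc_moebius_def)

lemma apollonius_denominator_bounds:
  fixes r :: real
  assumes "cmod z < 1" "0 < r" "r \<le> 1"
  shows "0 < 1 - (cmod z)\<^sup>2" and "1 - (cmod z)\<^sup>2 \<le> 1 - r\<^sup>2 * (cmod z)\<^sup>2"
proof -
  have "(cmod z)\<^sup>2 < 1"
    using assms(1) by (simp add: abs_square_less_1)
  moreover have "r\<^sup>2 * (cmod z)\<^sup>2 \<le> (cmod z)\<^sup>2"
    using assms by (simp add: mult_left_le_one_le power_le_one)
  ultimately show "0 < 1 - (cmod z)\<^sup>2" "1 - (cmod z)\<^sup>2 \<le> 1 - r\<^sup>2 * (cmod z)\<^sup>2"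
    by linarith+
qed

lemma disc_moebius_sublevel_subset_cball:
  fixes r :: real
  assumes z: "cmod z < 1" and r: "0 < r" "r \<le> 1"
  defines "D \<equiv> 1 - r\<^sup>2 * (cmod z)\<^sup>2"
  shows "{\<xi> \<in> ball 0 1. cmod (disc_moebius z \<xi>) \<le> r} \<subseteq>
         cball (of_real ((1 - r\<^sup>2) / D) * z) (r * (1 - (cmod z)\<^sup>2) / D)"
proof
  fix \<xi> assume "\<xi> \<in> {\<xi> \<in> ball 0 1. cmod (disc_moebius z \<xi>) \<le> r}"
  then have \<xi>: "cmod \<xi> < 1" and le_r: "cmod (disc_moebius z \<xi>) \<le> r" by auto
  have D: "0 < D"
    unfolding D_def using apollonius_denominator_bounds[OF z r] by linarith
  have "0 < cmod (1 - cnj z * \<xi>)"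
    using norm_diff_lt_norm_one_minus_cnj_mult[OF z \<xi>] by (meson norm_ge_zero le_less_trans)
  then have "cmod (\<xi> - z) \<le> r * cmod (1 - cnj z * \<xi>)"
    using le_r by (simp add: disc_moebius_def norm_divide pos_divide_le_eq)
  then have "(cmod (\<xi> - z))\<^sup>2 \<le> r\<^sup>2 * (cmod (1 - cnj z * \<xi>))\<^sup>2"
    by (metis norm_ge_zero power_mono power_mult_distrib)
  with D have "D * ((cmod (\<xi> - z))\<^sup>2 - r\<^sup>2 * (cmod (1 - cnj z * \<xi>))\<^sup>2) \<le> 0"
    by (intro mult_nonneg_nonpos) simp_all
  then have "(cmod (of_real D * \<xi> - of_real (1 - r\<^sup>2) * z))\<^sup>2 \<le> (r * (1 - (cmod z)\<^sup>2))\<^sup>2"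
    using apollonius_identity[of r z \<xi>] unfolding D_def power_mult_distrib by linarith
  moreover have "0 \<le> r * (1 - (cmod z)\<^sup>2)"
    using apollonius_denominator_bounds[OF z r] r by simp
  ultimately have "cmod (of_real D * \<xi> - of_real (1 - r\<^sup>2) * z) \<le> r * (1 - (cmod z)\<^sup>2)"
    by (rule power2_le_imp_le)
  moreover have "of_real D * (\<xi> - of_real ((1 - r\<^sup>2) / D) * z) = of_real D * \<xi> - of_real (1 - r\<^sup>2) * z"
    using D by (simp only: right_diff_distrib mult.assoc[symmetric] flip: of_real_mult) simp
  ultimately have "D * dist \<xi> (of_real ((1 - r\<^sup>2) / D) * z) \<le> r * (1 - (cmod z)\<^sup>2)"
    using D by (metis abs_of_pos dist_norm norm_mult norm_of_real)
  then show "\<xi> \<in> cball (of_real ((1 - r\<^sup>2) / D) * z) (r * (1 - (cmod z)\<^sup>2) / D)"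
    using D by (simp add: dist_commute pos_le_divide_eq mult.commute)
qed

lemma emeasure_disc_moebius_sublevel_le:
  assumes z: "cmod z < 1" and r: "0 < r" "r \<le> 1"
  shows "emeasure lborel {\<xi> \<in> ball 0 1. cmod (disc_moebius z \<xi>) \<le> r} \<le> ennreal (pi * r\<^sup>2)"
proof -
  define D where "D = 1 - r\<^sup>2 * (cmod z)\<^sup>2"
  define \<rho> where "\<rho> = r * (1 - (cmod z)\<^sup>2) / D"
  have "0 < 1 - (cmod z)\<^sup>2" "1 - (cmod z)\<^sup>2 \<le> D"
    unfolding D_def using apollonius_denominator_bounds[OF z r] by simp_all
  moreover from this have "0 < D" by linarith
  ultimately have "0 \<le> \<rho>" "\<rho> \<le> r"
    using r by (auto simp: \<rho>_def divide_le_eq mult_left_mono)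
  have "emeasure lborel {\<xi> \<in> ball 0 1. cmod (disc_moebius z \<xi>) \<le> r}
          \<le> emeasure lborel (cball (of_real ((1 - r\<^sup>2) / D) * z) \<rho>)"
    using disc_moebius_sublevel_subset_cball[OF z r] unfolding D_def \<rho>_def
    by (intro emeasure_mono) auto
  also have "\<dots> = ennreal (pi * \<rho>\<^sup>2)"
    using \<open>0 \<le> \<rho>\<close> by (simp only: emeasure_cball) (simp add: unit_ball_vol_2)
  also have "\<dots> \<le> ennreal (pi * r\<^sup>2)"
    using \<open>0 \<le> \<rho>\<close> \<open>\<rho> \<le> r\<close> by (intro ennreal_leI mult_left_mono power_mono) auto
  finally show ?thesis .
qed

lemma emeasure_disc_moebius_0_sublevel:
  assumes "0 < r" "r \<le> 1"
  shows "emeasure lborel {\<xi> \<in> ball 0 1. cmod (disc_moebius 0 \<xi>) \<le> r} = ennreal (pi * r\<^sup>2)"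
proof (rule antisym)
  show "emeasure lborel {\<xi> \<in> ball 0 1. cmod (disc_moebius 0 \<xi>) \<le> r} \<le> ennreal (pi * r\<^sup>2)"
    using assms by (intro emeasure_disc_moebius_sublevel_le) auto
  have "ball 0 r \<subseteq> {\<xi> \<in> ball 0 1. cmod (disc_moebius 0 \<xi>) \<le> r}"
    using assms by (auto simp: disc_moebius_def)
  then have "emeasure lborel (ball (0::complex) r) \<le> emeasure lborel {\<xi> \<in> ball 0 1. cmod (disc_moebius 0 \<xi>) \<le> r}"
    by (intro emeasure_mono) (auto simp: disc_moebius_def)
  then show "ennreal (pi * r\<^sup>2) \<le> emeasure lborel {\<xi> \<in> ball 0 1. cmod (disc_moebius 0 \<xi>) \<le> r}"
    using assms by (simp add: emeasure_ball unit_ball_vol_2)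
qed

lemma nn_integral_ln_squared_disc_moebius:
  assumes "cmod z < 1"
  shows "(\<integral>\<^sup>+\<xi>. indicator (ball 0 1) \<xi> * ennreal ((ln (cmod (disc_moebius z \<xi>)))\<^sup>2) \<partial>lborel) =
         (\<integral>\<^sup>+r. indicator {0<..1} r * ennreal (- 2 * ln r / r) *
                 emeasure lborel {\<xi> \<in> ball 0 1. cmod (disc_moebius z \<xi>) \<le> r} \<partial>lborel)"
proof (rule nn_integral_ln_squared_layer_cake)
  show "sigma_finite_measure (lborel :: complex measure)"
    by (rule lborel.sigma_finite_measure_axioms)
  show "(\<lambda>\<xi>. cmod (disc_moebius z \<xi>)) \<in> borel_measurable lborel"
    by measurable
  show "cmod (disc_moebius z \<xi>) \<le> 1" if "\<xi> \<in> ball 0 1" for \<xi>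
    using norm_disc_moebius_less_1[OF assms] that by (simp add: less_imp_le)
  show "AE \<xi> in lborel. \<xi> \<in> ball 0 1 \<longrightarrow> 0 < cmod (disc_moebius z \<xi>)"
    using AE_lborel_singleton[of z] by eventually_elim (use assms disc_moebius_eq_0_iff in auto)
qed simp

lemma nn_integral_ln_squared_disc_moebius_le:
  assumes "cmod z < 1"
  shows "(\<integral>\<^sup>+\<xi>. indicator (ball 0 1) \<xi> * ennreal ((ln (cmod (disc_moebius z \<xi>)))\<^sup>2) \<partial>lborel) \<le> ennreal (pi / 2)"
  unfolding nn_integral_ln_squared_disc_moebius[OF assms] nn_integral_ln_weight_times_disc_area[symmetric]
  using emeasure_disc_moebius_sublevel_le[OF assms]
  by (intro nn_integral_mono) (auto simp: indicator_def intro!: mult_left_mono)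

lemma nn_integral_ln_squared_disc_moebius_0:
  "(\<integral>\<^sup>+\<xi>. indicator (ball 0 1) \<xi> * ennreal ((ln (cmod (disc_moebius 0 \<xi>)))\<^sup>2) \<partial>lborel) = ennreal (pi / 2)"
  unfolding nn_integral_ln_squared_disc_moebius[of 0, simplified] nn_integral_ln_weight_times_disc_area[symmetric]
  using emeasure_disc_moebius_0_sublevel
  by (intro nn_integral_cong) (auto simp: indicator_def)

lemma green_disc_eq_ln_norm_disc_moebius:
  "green_disc z \<xi> = ln (cmod (disc_moebius z \<xi>)) / (2 * pi)"
  by (simp add: green_disc_def disc_moebius_def)

lemma borel_measurable_green_disc [measurable]: "green_disc z \<in> borel_measurable borel"
  unfolding green_disc_eq_ln_norm_disc_moebius by measurable

lemma nn_integral_green_disc_squared: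
  "(\<integral>\<^sup>+\<xi>. indicator (ball 0 1) \<xi> * ennreal ((green_disc z \<xi>)\<^sup>2) \<partial>lborel) =
   (\<integral>\<^sup>+\<xi>. indicator (ball 0 1) \<xi> * ennreal ((ln (cmod (disc_moebius z \<xi>)))\<^sup>2) \<partial>lborel) *
     ennreal (1 / (4 * pi\<^sup>2))"
proof -
  have "(\<integral>\<^sup>+\<xi>. indicator (ball 0 1) \<xi> * ennreal ((green_disc z \<xi>)\<^sup>2) \<partial>lborel) =
        (\<integral>\<^sup>+\<xi>. indicator (ball 0 1) \<xi> * ennreal ((ln (cmod (disc_moebius z \<xi>)))\<^sup>2) *
               ennreal (1 / (4 * pi\<^sup>2)) \<partial>lborel)"
    by (intro nn_integral_cong) (simp add: green_disc_eq_ln_norm_disc_moebius power_divide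
        power_mult_distrib ennreal_mult'[symmetric] mult.assoc)
  also have "\<dots> = (\<integral>\<^sup>+\<xi>. indicator (ball 0 1) \<xi> * ennreal ((ln (cmod (disc_moebius z \<xi>)))\<^sup>2) \<partial>lborel) *
                  ennreal (1 / (4 * pi\<^sup>2))"
    by (rule nn_integral_multc) measurable
  finally show ?thesis .
qed

lemma L2_norm_disc_eq_nn_integral:
  assumes [measurable]: "f \<in> borel_measurable lborel"
  shows "L2_norm_disc f = sqrt (enn2real (\<integral>\<^sup>+\<xi>. indicator (ball 0 1) \<xi> * ennreal ((f \<xi>)\<^sup>2) \<partial>lborel))"
proof -
  have "(\<integral>\<xi>\<in>ball 0 1. (f \<xi>)\<^sup>2 \<partial>lborel) = (\<integral>\<xi>. indicator (ball 0 1) \<xi> * (f \<xi>)\<^sup>2 \<partial>lborel)"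
    by (simp add: set_lebesgue_integral_def)
  also have "\<dots> = enn2real (\<integral>\<^sup>+\<xi>. indicator (ball 0 1) \<xi> * ennreal ((f \<xi>)\<^sup>2) \<partial>lborel)"
    by (subst integral_eq_nn_integral) (auto simp: indicator_def intro!: arg_cong[where f = enn2real] nn_integral_cong)
  finally show ?thesis
    by (simp add: L2_norm_disc_def)
qed

lemma set_integrable_square_ball:
  assumes [measurable]: "f \<in> borel_measurable lborel"
    and "(\<integral>\<^sup>+\<xi>. indicator (ball 0 1) \<xi> * ennreal ((f \<xi>)\<^sup>2) \<partial>lborel) < \<infinity>"
  shows "set_integrable lborel (ball 0 1) (\<lambda>\<xi>. (f \<xi>)\<^sup>2)"
  unfolding set_integrable_def
proof (rule integrableI_bounded)
  have "(\<integral>\<^sup>+\<xi>. ennreal (norm (indicator (ball 0 1) \<xi> *\<^sub>R (f \<xi>)\<^sup>2)) \<partial>lborel) =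
        (\<integral>\<^sup>+\<xi>. indicator (ball 0 1) \<xi> * ennreal ((f \<xi>)\<^sup>2) \<partial>lborel)"
    by (intro nn_integral_cong) (simp add: indicator_def)
  with assms(2) show "(\<integral>\<^sup>+\<xi>. ennreal (norm (indicator (ball 0 1) \<xi> *\<^sub>R (f \<xi>)\<^sup>2)) \<partial>lborel) < \<infinity>"
    by simp
qed measurable

theorem lemma2:
  fixes z :: complex
  assumes "z \<in> ball 0 1"
  shows "set_integrable lborel (ball 0 1) (\<lambda>\<xi>. (green_disc z \<xi>)\<^sup>2) \<and>
         L2_norm_disc (green_disc z) \<le> L2_norm_disc (green_disc 0) \<and>
         L2_norm_disc (green_disc 0) = 1 / sqrt (8 * pi)"
proof -
  define I where "I w = (\<integral>\<^sup>+\<xi>. indicator (ball 0 1) \<xi> * ennreal ((green_disc w \<xi>)\<^sup>2) \<partial>lborel)" for w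
  have scale: "ennreal (pi / 2) * ennreal (1 / (4 * pi\<^sup>2)) = ennreal (1 / (8 * pi))"
    by (simp add: ennreal_mult'[symmetric] power2_eq_square)
  have I_z: "I z \<le> ennreal (1 / (8 * pi))"
    unfolding I_def nn_integral_green_disc_squared scale[symmetric]
    using assms by (intro mult_right_mono nn_integral_ln_squared_disc_moebius_le) auto
  have I_0: "I 0 = ennreal (1 / (8 * pi))"
    unfolding I_def nn_integral_green_disc_squared scale[symmetric] nn_integral_ln_squared_disc_moebius_0 ..
  have "set_integrable lborel (ball 0 1) (\<lambda>\<xi>. (green_disc z \<xi>)\<^sup>2)"
    using I_z by (intro set_integrable_square_ball) (auto simp: I_def le_less_trans)
  moreover have "L2_norm_disc (green_disc z) \<le> L2_norm_disc (green_disc 0)"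
  proof -
    have "enn2real (I z) \<le> enn2real (I 0)"
      using I_z I_0 by (metis enn2real_mono ennreal_less_top)
    then show ?thesis
      by (simp add: L2_norm_disc_eq_nn_integral I_def[symmetric])
  qed
  moreover have "L2_norm_disc (green_disc 0) = 1 / sqrt (8 * pi)"
    using I_0 by (simp add: L2_norm_disc_eq_nn_integral I_def[symmetric] real_sqrt_divide)
  ultimately show ?thesis by blast
qed

end
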